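(* Let $X=[a,b]^n$ with $a<b$, let $Z_d(z,x)\in\mathbb{R}^q$ be the vector of all monomials of degree at most $d$ in $(z,x)\in\mathbb{R}^{2n}$, let $P\in\mathbb{R}^{2q\times 2q}$ be symmetric, and let $k(x,y)=\int_X N(z,x)^TPN(z,y)\,dz$ with $N(z,x)=\begin{bmatrix} Z_d(z,x)I_{S_1}(z,x)\\ Z_d(z,x)I_{S_2}(z,x)\end{bmatrix}$. Then for each $\alpha\in\{0,1\}^n$ there is a polynomial $k_\alpha$ in the $2n$ variables $(x,y)$ such that $k(x,y)=k_\alpha(x,y)$ for all $x,y\in X$ satisfying $(-1)^{\alpha_i}(x_i-y_i)\ge 0$ for all $i=1,\dots,n$.
   Context: For $z,x\in\mathbb{R}^n$ write $z\ge x$ if $z_i\ge x_i$ for all $i$. Let $S_1:=\{(z,x)\in X\times X: z\ge x\}$, $S_2:=(X\times X)\setminus S_1$, and $I_S$ denotes the indicator function of a set $S$. *)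

theory Defs
  imports "HOL-Analysis.Analysis"
begin

definition boxX :: "real \<Rightarrow> real \<Rightarrow> (real^'n) set" where
  "boxX a b = {x. \<forall>i. a \<le> x $ i \<and> x $ i \<le> b}"

definition vge :: "real^'n \<Rightarrow> real^'n \<Rightarrow> bool" where
  "vge z x \<longleftrightarrow> (\<forall>i. z $ i \<ge> x $ i)"

definition S1 :: "real \<Rightarrow> real \<Rightarrow> ((real^'n) \<times> (real^'n)) set" where
  "S1 a b = {(z, x). z \<in> boxX a b \<and> x \<in> boxX a b \<and> vge z x}"

definition S2 :: "real \<Rightarrow> real \<Rightarrow> ((real^'n) \<times> (real^'n)) set" where
  "S2 a b = (boxX a b \<times> boxX a b) - S1 a b"

text \<open>The entries of Z_d are indexed by this (finite) set, so q = card (deg_monos d).\<close>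
definition deg_monos :: "nat \<Rightarrow> (('n::finite \<Rightarrow> nat) \<times> ('n \<Rightarrow> nat)) set" where
  "deg_monos d = {(\<beta>, \<gamma>). sum \<beta> UNIV + sum \<gamma> UNIV \<le> d}"

definition mono_val :: "(('n::finite \<Rightarrow> nat) \<times> ('n \<Rightarrow> nat)) \<Rightarrow> real^'n \<Rightarrow> real^'n \<Rightarrow> real" where
  "mono_val m z x = (\<Prod>i\<in>UNIV. (z $ i) ^ (fst m i)) * (\<Prod>i\<in>UNIV. (x $ i) ^ (snd m i))"

text \<open>Index set of the vector N(z,x) \<in> R^{2q}: (True, m) is the entry of the
  upper block Z_d I_{S_1}, (False, m) the entry of the lower block Z_d I_{S_2}.\<close>
definition Nidx :: "nat \<Rightarrow> (bool \<times> (('n::finite \<Rightarrow> nat) \<times> ('n \<Rightarrow> nat))) set" where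
  "Nidx d = UNIV \<times> deg_monos d"

definition Nvec :: "real \<Rightarrow> real \<Rightarrow> bool \<times> (('n::finite \<Rightarrow> nat) \<times> ('n \<Rightarrow> nat))
    \<Rightarrow> real^'n \<Rightarrow> real^'n \<Rightarrow> real" where
  "Nvec a b u z x = mono_val (snd u) z x *
     (if fst u then indicator (S1 a b) (z, x) else indicator (S2 a b) (z, x))"

text \<open>k(x,y) = \<integral>_X N(z,x)^T P N(z,y) dz, P a 2q x 2q matrix indexed by Nidx d.\<close>
definition kern :: "real \<Rightarrow> real \<Rightarrow> nat
    \<Rightarrow> (bool \<times> (('n::finite \<Rightarrow> nat) \<times> ('n \<Rightarrow> nat)) \<Rightarrow> bool \<times> (('n \<Rightarrow> nat) \<times> ('n \<Rightarrow> nat)) \<Rightarrow> real)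
    \<Rightarrow> real^'n \<Rightarrow> real^'n \<Rightarrow> real" where
  "kern a b d P x y = integral (boxX a b)
     (\<lambda>z. \<Sum>u\<in>Nidx d. \<Sum>v\<in>Nidx d. Nvec a b u z x * P u v * Nvec a b v z y)"

definition poly2 :: "((real^'n::finite) \<Rightarrow> real^'n \<Rightarrow> real) \<Rightarrow> bool" where
  "poly2 f \<longleftrightarrow> (\<exists>E c. finite E \<and>
     (\<forall>x y. f x y = (\<Sum>m\<in>E. c m * mono_val m x y)))"

end

theory Submission
  imports Defs
begin

text \<open>On the box X the lower block of N is the upper block with I_{S_1} replaced by
  1 - I_{S_1}, and for z, x \<in> X the indicator I_{S_1}(z,x) is that of the upper box
  [x, b]^n in z. Hence k(x,y) is a combination, with coefficients monomial in x and y, of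
  integrals of monomials in z over X, [x,b]^n, [y,b]^n and [x,b]^n \<inter> [y,b]^n = [max x y, b]^n.
  By Fubini the integral of a monomial over [w,b]^n is a polynomial in w, and in the region
  selected by \<alpha> every coordinate of max x y is a fixed one of x_i, y_i.\<close>

lemma
  fixes f :: "'a::euclidean_space \<Rightarrow> real \<Rightarrow> real"
  assumes integrable_f: "\<And>b. b \<in> Basis \<Longrightarrow> integrable lborel (f b)"
  shows integrable_lborel_prod_Basis: "integrable lborel (\<lambda>x::'a. \<Prod>b\<in>Basis. f b (x \<bullet> b))"
    and integral_lborel_prod_Basis:
      "(\<integral>x. (\<Prod>b\<in>Basis. f b (x \<bullet> b)) \<partial>lborel) = (\<Prod>b\<in>Basis. \<integral>t. f b t \<partial>lborel)"
proof -
  interpret product_sigma_finite "\<lambda>_::'a. lborel :: real measure" by standard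
  let ?M = "\<Pi>\<^sub>M b\<in>(Basis::'a set). lborel" and ?g = "\<lambda>g. \<Sum>b\<in>Basis. g b *\<^sub>R b"
  have [measurable]: "?g \<in> measurable ?M borel" by measurable
  have [measurable]: "f b \<in> borel_measurable borel" if "b \<in> Basis" for b
    using borel_measurable_integrable[OF integrable_f[OF that]] by simp
  have coord: "?g g \<bullet> b = g b" if "b \<in> Basis" for g and b :: 'a
    using that by (simp add: inner_sum_left inner_Basis if_distrib cong: if_cong)
  have "(\<Prod>b\<in>Basis. f b (?g g \<bullet> b)) = (\<Prod>b\<in>Basis. f b (g b))" for g
    by (intro prod.cong refl) (simp add: coord)
  moreover have "integrable ?M (\<lambda>g. \<Prod>b\<in>Basis. f b (g b))"
    by (rule product_integrable_prod) (auto intro: integrable_f)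
  ultimately show "integrable lborel (\<lambda>x::'a. \<Prod>b\<in>Basis. f b (x \<bullet> b))"
    by (subst lborel_eq) (simp add: integrable_distr_eq)
  have "(\<integral>x. (\<Prod>b\<in>Basis. f b (x \<bullet> b)) \<partial>lborel) = (\<integral>g. (\<Prod>b\<in>Basis. f b (?g g \<bullet> b)) \<partial>?M)"
    by (subst lborel_eq) (simp add: integral_distr)
  also have "\<dots> = (\<integral>g. (\<Prod>b\<in>Basis. f b (g b)) \<partial>?M)"
    by (simp add: coord)
  also have "\<dots> = (\<Prod>b\<in>Basis. \<integral>t. f b t \<partial>lborel)"
    by (rule product_integral_prod) (auto intro: integrable_f)
  finally show "(\<integral>x. (\<Prod>b\<in>Basis. f b (x \<bullet> b)) \<partial>lborel) = (\<Prod>b\<in>Basis. \<integral>t. f b t \<partial>lborel)" .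
qed

lemma
  fixes h :: "'n::finite \<Rightarrow> real \<Rightarrow> real"
  assumes integrable_h: "\<And>i. integrable lborel (h i)"
  shows integrable_lborel_prod_cart: "integrable lborel (\<lambda>x::real^'n. \<Prod>i\<in>UNIV. h i (x $ i))"
    and integral_lborel_prod_cart:
      "(\<integral>x. (\<Prod>i\<in>UNIV. h i (x $ i)) \<partial>(lborel :: (real^'n) measure)) = (\<Prod>i\<in>UNIV. \<integral>t. h i t \<partial>lborel)"
proof -
  let ?e = "\<lambda>i::'n. axis i (1::real)"
  define f where "f b = h (inv ?e b)" for b
  have inj: "inj ?e"
    by (auto simp: inj_def axis_eq_axis)
  have Basis: "Basis = range ?e"
    by (auto simp: Basis_vec_def)
  have f_axis: "f (?e i) = h i" for i
    by (simp add: f_def inv_f_f[OF inj])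
  have integrable_f: "integrable lborel (f b)" if "b \<in> Basis" for b
    using that integrable_h by (auto simp: Basis f_axis)
  have "(\<Prod>b\<in>Basis. f b (x \<bullet> b)) = (\<Prod>i\<in>UNIV. h i (x $ i))" for x :: "real^'n"
    by (simp add: Basis prod.reindex[OF inj] f_axis cart_eq_inner_axis)
  moreover have "(\<Prod>b\<in>Basis. \<integral>t. f b t \<partial>lborel) = (\<Prod>i\<in>UNIV. \<integral>t. h i t \<partial>lborel)"
    by (simp add: Basis prod.reindex[OF inj] f_axis)
  ultimately show "integrable lborel (\<lambda>x::real^'n. \<Prod>i\<in>UNIV. h i (x $ i))"
    and "(\<integral>x. (\<Prod>i\<in>UNIV. h i (x $ i)) \<partial>(lborel :: (real^'n) measure)) = (\<Prod>i\<in>UNIV. \<integral>t. h i t \<partial>lborel)"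
    using integrable_lborel_prod_Basis[of f, OF integrable_f] integral_lborel_prod_Basis[of f, OF integrable_f]
    by simp_all
qed

lemma has_integral_prod_cbox_cart:
  fixes f :: "'n::finite \<Rightarrow> real \<Rightarrow> real" and w c :: "real^'n"
  assumes "\<And>i. continuous_on {w $ i..c $ i} (f i)"
  shows "((\<lambda>z. \<Prod>i\<in>UNIV. f i (z $ i)) has_integral (\<Prod>i\<in>UNIV. integral {w $ i..c $ i} (f i))) (cbox w c)"
proof -
  define h where "h i = (\<lambda>t. indicator {w $ i..c $ i} t * f i t)" for i
  have integrable_h: "integrable lborel (h i)" for i
    using borel_integrable_compact[OF compact_Icc assms] by (simp add: h_def)
  have lborel_h: "(\<integral>t. h i t \<partial>lborel) = integral {w $ i..c $ i} (f i)" for i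
    using integral_lborel[OF integrable_h, symmetric]
    by (simp only: h_def indicator_times_eq_if integral_restrict_UNIV)
  have prod_h: "(\<Prod>i\<in>UNIV. h i (z $ i)) = (if z \<in> cbox w c then \<Prod>i\<in>UNIV. f i (z $ i) else 0)" for z
    by (auto simp: h_def prod.distrib mem_box_cart indicator_def)
  have "((\<lambda>z. \<Prod>i\<in>UNIV. h i (z $ i)) has_integral (\<Prod>i\<in>UNIV. integral {w $ i..c $ i} (f i))) UNIV"
    using has_integral_integral_lborel[OF integrable_lborel_prod_cart[of h, OF integrable_h]]
    by (simp add: integral_lborel_prod_cart[of h, OF integrable_h] lborel_h)
  then show ?thesis
    by (simp add: prod_h)
qed

lemma poly2_mono_val: "poly2 (mono_val m)"
  unfolding poly2_def by (intro exI[of _ "{m}"] exI[of _ "\<lambda>_. 1"]) simp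

lemma poly2_zero: "poly2 (\<lambda>x y. 0)"
  unfolding poly2_def by (intro exI[of _ "{}"]) simp

lemma poly2_scale: "poly2 f \<Longrightarrow> poly2 (\<lambda>x y. c * f x y)"
  unfolding poly2_def
  by (auto simp: sum_distrib_left mult.assoc intro!: exI[of _ "\<lambda>m. c * _ m"])

lemma poly2_add:
  assumes "poly2 f" and "poly2 g"
  shows "poly2 (\<lambda>x y. f x y + g x y)"
proof -
  obtain E c where E: "finite E" and f: "\<And>x y. f x y = (\<Sum>m\<in>E. c m * mono_val m x y)"
    using assms(1) unfolding poly2_def by blast
  obtain E' c' where E': "finite E'" and g: "\<And>x y. g x y = (\<Sum>m\<in>E'. c' m * mono_val m x y)"
    using assms(2) unfolding poly2_def by blast
  have extend: "(\<Sum>m\<in>A. k m * mono_val m x y) = (\<Sum>m\<in>E \<union> E'. (if m \<in> A then k m else 0) * mono_val m x y)"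
    if "A \<subseteq> E \<union> E'" for A k x y
    using that E E' by (intro sum.mono_neutral_cong_left) auto
  define e where "e m = (if m \<in> E then c m else 0) + (if m \<in> E' then c' m else 0)" for m
  have "f x y + g x y = (\<Sum>m\<in>E \<union> E'. e m * mono_val m x y)" for x y
    unfolding f g extend[of E c, OF Un_upper1] extend[of E' c', OF Un_upper2] e_def
    by (simp add: distrib_right sum.distrib)
  with E E' show ?thesis
    unfolding poly2_def by (intro exI[of _ "E \<union> E'"] exI[of _ e]) simp
qed

lemma poly2_sum: "(\<And>i. i \<in> I \<Longrightarrow> poly2 (f i)) \<Longrightarrow> poly2 (\<lambda>x y. \<Sum>i\<in>I. f i x y)"
  by (induction I rule: infinite_finite_induct) (simp_all add: poly2_zero poly2_add)

lemma mono_val_mult: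
  "mono_val m x y * mono_val m' x y = mono_val (\<lambda>i. fst m i + fst m' i, \<lambda>i. snd m i + snd m' i) x y"
  by (simp add: mono_val_def power_add prod.distrib mult_ac)

lemma poly2_mult:
  assumes "poly2 f" and "poly2 g"
  shows "poly2 (\<lambda>x y. f x y * g x y)"
proof -
  obtain E c where f: "\<And>x y. f x y = (\<Sum>m\<in>E. c m * mono_val m x y)"
    using assms(1) unfolding poly2_def by blast
  obtain E' c' where g: "\<And>x y. g x y = (\<Sum>m\<in>E'. c' m * mono_val m x y)"
    using assms(2) unfolding poly2_def by blast
  have "f x y * g x y = (\<Sum>m\<in>E. \<Sum>m'\<in>E'. (c m * c' m') *
      mono_val (\<lambda>i. fst m i + fst m' i, \<lambda>i. snd m i + snd m' i) x y)" for x y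
    unfolding f g sum_product by (simp add: mono_val_mult[symmetric] mult_ac)
  moreover have "poly2 (\<lambda>x y. \<Sum>m\<in>E. \<Sum>m'\<in>E'. (c m * c' m') *
      mono_val (\<lambda>i. fst m i + fst m' i, \<lambda>i. snd m i + snd m' i) x y)"
    by (intro poly2_sum poly2_scale poly2_mono_val)
  ultimately show ?thesis
    by simp
qed

lemma poly2_const: "poly2 (\<lambda>(x::real^'n::finite) y. c)"
  using poly2_scale[OF poly2_mono_val, of c "(\<lambda>_. 0, \<lambda>_. 0)"] by (simp add: mono_val_def)

lemma poly2_diff: "poly2 f \<Longrightarrow> poly2 g \<Longrightarrow> poly2 (\<lambda>x y. f x y - g x y)"
  using poly2_add[of f "\<lambda>x y. (-1) * g x y"] poly2_scale[of g "-1"] by simp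

lemma poly2_prod: "(\<And>i. i \<in> I \<Longrightarrow> poly2 (f i)) \<Longrightarrow> poly2 (\<lambda>x y. \<Prod>i\<in>I. f i x y)"
  by (induction I rule: infinite_finite_induct) (simp_all add: poly2_const poly2_mult)

lemma poly2_power: "poly2 f \<Longrightarrow> poly2 (\<lambda>x y. f x y ^ k)"
  by (induction k) (simp_all add: poly2_const poly2_mult)

lemma poly2_component_left:
  fixes i :: "'n::finite"
  shows "poly2 (\<lambda>x y. x $ i)"
proof -
  have "(\<lambda>x y. x $ i) = mono_val (\<lambda>j. if j = i then 1 else 0, \<lambda>_. 0)"
    by (simp add: fun_eq_iff mono_val_def if_distrib cong: if_cong)
  then show ?thesis
    by (simp add: poly2_mono_val)
qed

lemma poly2_component_right:
  fixes i :: "'n::finite"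
  shows "poly2 (\<lambda>x y. y $ i)"
proof -
  have "(\<lambda>x y. y $ i) = mono_val (\<lambda>_. 0, \<lambda>j. if j = i then 1 else 0)"
    by (simp add: fun_eq_iff mono_val_def if_distrib cong: if_cong)
  then show ?thesis
    by (simp add: poly2_mono_val)
qed

definition cart_monomial :: "('n::finite \<Rightarrow> nat) \<Rightarrow> real^'n \<Rightarrow> real" where
  "cart_monomial k z = (\<Prod>i\<in>UNIV. z $ i ^ k i)"

definition monomial_box_integral :: "('n::finite \<Rightarrow> nat) \<Rightarrow> real^'n \<Rightarrow> real^'n \<Rightarrow> real" where
  "monomial_box_integral k w c = (\<Prod>i\<in>UNIV. (c $ i ^ Suc (k i) - w $ i ^ Suc (k i)) / Suc (k i))"

lemma has_integral_power_Icc: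
  fixes u v :: real
  assumes "u \<le> v"
  shows "((\<lambda>t. t ^ k) has_integral (v ^ Suc k - u ^ Suc k) / Suc k) {u..v}"
proof -
  have "((\<lambda>t. t ^ Suc k / Suc k) has_vector_derivative t ^ k) (at t within {u..v})" for t
    using DERIV_cdivide[OF DERIV_pow[of "Suc k"], of "Suc k"]
    by (simp add: has_real_derivative_iff_has_vector_derivative)
  from fundamental_theorem_of_calculus[OF assms this] show ?thesis
    by (simp add: diff_divide_distrib)
qed

lemma has_integral_cart_monomial:
  fixes w c :: "real^'n::finite"
  assumes "w \<le> c"
  shows "(cart_monomial k has_integral monomial_box_integral k w c) {w..c}"
proof -
  have "integral {w $ i..c $ i} (\<lambda>t. t ^ k i) = (c $ i ^ Suc (k i) - w $ i ^ Suc (k i)) / Suc (k i)" for i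
    using assms by (intro integral_unique has_integral_power_Icc) (simp add: less_eq_vec_def)
  then show ?thesis
    using has_integral_prod_cbox_cart[of w c "\<lambda>i t. t ^ k i"]
    by (simp add: cart_monomial_def[abs_def] monomial_box_integral_def interval_cbox_cart continuous_intros)
qed

lemma indicator_upper_Icc_mult:
  fixes x y z c :: "real^'n::finite"
  shows "indicator {x..c} z * indicator {y..c} z = (indicator {sup x y..c} z :: real)"
  by (auto simp: indicator_def less_eq_vec_def sup_vec_def)

lemma has_integral_monomial_affine_upper_indicators:
  fixes u c x y :: "real^'n::finite"
  assumes "u \<le> x" "x \<le> c" "u \<le> y" "y \<le> c"
  shows "((\<lambda>z. cart_monomial k z * ((p + q * indicator {x..c} z) * (r + s * indicator {y..c} z)))
    has_integral p * r * monomial_box_integral k u c + p * s * monomial_box_integral k y c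
      + q * r * monomial_box_integral k x c + q * s * monomial_box_integral k (sup x y) c) {u..c}"
proof -
  have upper_set: "((\<lambda>z. cart_monomial k z * indicator {w..c} z) has_integral monomial_box_integral k w c) {u..c}"
    if "u \<le> w" "w \<le> c" for w
  proof -
    have "{w..c} \<subseteq> {u..c}"
      using that by auto
    then show ?thesis
      using has_integral_cart_monomial[OF \<open>w \<le> c\<close>]
      by (simp only: indicator_times_eq_if has_integral_restrict)
  qed
  have "sup x y \<le> c" "u \<le> sup x y"
    using assms by (auto intro: le_supI1)
  moreover have "cart_monomial k z * ((p + q * indicator {x..c} z) * (r + s * indicator {y..c} z)) =
      p * r * cart_monomial k z + p * s * (cart_monomial k z * indicator {y..c} z)
      + q * r * (cart_monomial k z * indicator {x..c} z)
      + q * s * (cart_monomial k z * indicator {sup x y..c} z)" for z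
    by (simp add: indicator_upper_Icc_mult[symmetric] algebra_simps)
  ultimately show ?thesis
    using assms order_trans[OF assms(1,2)]
    by (simp only:) (intro has_integral_add has_integral_mult_right upper_set has_integral_cart_monomial)
qed

lemma boxX_eq_Icc: "boxX a b = {vec a..vec b}"
  by (auto simp: boxX_def less_eq_vec_def)

lemma finite_deg_monos: "finite (deg_monos d :: (('n::finite \<Rightarrow> nat) \<times> ('n \<Rightarrow> nat)) set)"
proof -
  let ?B = "{f :: 'n \<Rightarrow> nat. \<forall>i. f i \<le> d}"
  have "?B = (\<Pi>\<^sub>E i\<in>UNIV. {..d})"
    by (auto simp: PiE_UNIV_domain)
  then have "finite ?B"
    by (metis finite finite_PiE finite_atMost)
  moreover have "deg_monos d \<subseteq> ?B \<times> ?B"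
  proof (clarsimp simp: deg_monos_def)
    fix \<beta> \<gamma> :: "'n \<Rightarrow> nat"
    assume "sum \<beta> UNIV + sum \<gamma> UNIV \<le> d"
    moreover have "f i \<le> sum f UNIV" for f :: "'n \<Rightarrow> nat" and i
      by (rule member_le_sum) auto
    ultimately show "(\<forall>i. \<beta> i \<le> d) \<and> (\<forall>i. \<gamma> i \<le> d)"
      by (meson add_leD1 add_leD2 order_trans)
  qed
  ultimately show ?thesis
    by (blast intro: finite_subset)
qed

lemma finite_Nidx: "finite (Nidx d)"
  by (simp add: Nidx_def finite_deg_monos)

text \<open>On X the upper block of N carries the indicator of the upper box [x, b]^n and the
  lower block its complement; both are affine in that indicator, with these coefficients.\<close>

definition block_offset :: "bool \<Rightarrow> real" where
  "block_offset s = (if s then 0 else 1)"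

definition block_slope :: "bool \<Rightarrow> real" where
  "block_slope s = (if s then 1 else -1)"

lemma Nvec_on_boxX:
  assumes "z \<in> boxX a b" and "x \<in> boxX a b"
  shows "Nvec a b u z x = cart_monomial (fst (snd u)) z * cart_monomial (snd (snd u)) x *
    (block_offset (fst u) + block_slope (fst u) * indicator {x..vec b} z)"
  using assms
  by (auto simp: Nvec_def S2_def S1_def boxX_def vge_def mono_val_def cart_monomial_def
      block_offset_def block_slope_def indicator_def less_eq_vec_def)

lemma cart_monomial_mult: "cart_monomial k z * cart_monomial l z = cart_monomial (\<lambda>i. k i + l i) z"
  by (simp add: cart_monomial_def power_add prod.distrib)

text \<open>The last argument stands for the componentwise maximum of x and y.\<close>

definition kernel_formula :: "real \<Rightarrow> real \<Rightarrow> nat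
    \<Rightarrow> (bool \<times> (('n::finite \<Rightarrow> nat) \<times> ('n \<Rightarrow> nat)) \<Rightarrow> bool \<times> (('n \<Rightarrow> nat) \<times> ('n \<Rightarrow> nat)) \<Rightarrow> real)
    \<Rightarrow> real^'n \<Rightarrow> real^'n \<Rightarrow> real^'n \<Rightarrow> real" where
  "kernel_formula a b d P x y m = (\<Sum>u\<in>Nidx d. \<Sum>v\<in>Nidx d.
     let F = (\<lambda>w. monomial_box_integral (\<lambda>i. fst (snd u) i + fst (snd v) i) w (vec b));
         p = block_offset (fst u); q = block_slope (fst u);
         r = block_offset (fst v); s = block_slope (fst v)
     in P u v * cart_monomial (snd (snd u)) x * cart_monomial (snd (snd v)) y *
       (p * r * F (vec a) + p * s * F y + q * r * F x + q * s * F m))"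

lemma kern_eq_kernel_formula:
  assumes x: "x \<in> boxX a b" and y: "y \<in> boxX a b"
  shows "kern a b d P x y = kernel_formula a b d P x y (sup x y)"
proof -
  have "vec a \<le> x" "x \<le> vec b" "vec a \<le> y" "y \<le> vec b"
    using x y by (simp_all add: boxX_eq_Icc)
  then have formula_integral: "((\<lambda>z. \<Sum>u\<in>Nidx d. \<Sum>v\<in>Nidx d. P u v * cart_monomial (snd (snd u)) x * cart_monomial (snd (snd v)) y *
      (cart_monomial (\<lambda>i. fst (snd u) i + fst (snd v) i) z *
        ((block_offset (fst u) + block_slope (fst u) * indicator {x..vec b} z) *
         (block_offset (fst v) + block_slope (fst v) * indicator {y..vec b} z))))
      has_integral kernel_formula a b d P x y (sup x y)) (boxX a b)"
    unfolding kernel_formula_def Let_def boxX_eq_Icc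
    by (intro has_integral_sum finite_Nidx has_integral_mult_right
        has_integral_monomial_affine_upper_indicators)
  have integrand: "Nvec a b u z x * P u v * Nvec a b v z y =
      P u v * cart_monomial (snd (snd u)) x * cart_monomial (snd (snd v)) y *
      (cart_monomial (\<lambda>i. fst (snd u) i + fst (snd v) i) z *
        ((block_offset (fst u) + block_slope (fst u) * indicator {x..vec b} z) *
         (block_offset (fst v) + block_slope (fst v) * indicator {y..vec b} z)))"
    if "z \<in> boxX a b" for u v z
    using that x y by (simp add: Nvec_on_boxX cart_monomial_mult[symmetric] mult_ac)
  have "((\<lambda>z. \<Sum>u\<in>Nidx d. \<Sum>v\<in>Nidx d. Nvec a b u z x * P u v * Nvec a b v z y)
      has_integral kernel_formula a b d P x y (sup x y)) (boxX a b)"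
    by (rule has_integral_eq[OF _ formula_integral]) (intro sum.cong refl; simp only: integrand)
  then show ?thesis
    unfolding kern_def by (rule integral_unique)
qed

lemma poly2_cart_monomial_left: "poly2 (\<lambda>x y. cart_monomial k x)"
  unfolding cart_monomial_def by (intro poly2_prod poly2_power poly2_component_left)

lemma poly2_cart_monomial_right: "poly2 (\<lambda>x y. cart_monomial k y)"
  unfolding cart_monomial_def by (intro poly2_prod poly2_power poly2_component_right)

lemma poly2_monomial_box_integral:
  assumes "\<And>i. poly2 (\<lambda>x y. w x y $ i)"
  shows "poly2 (\<lambda>x y. monomial_box_integral k (w x y) c)"
  unfolding monomial_box_integral_def divide_inverse
  by (intro poly2_prod poly2_mult poly2_diff poly2_const poly2_power assms)

lemma poly2_kernel_formula:
  assumes "\<And>i. poly2 (\<lambda>x y. m x y $ i)"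
  shows "poly2 (\<lambda>x y. kernel_formula a b d P x y (m x y))"
  unfolding kernel_formula_def Let_def
  by (intro poly2_sum poly2_add poly2_mult poly2_const poly2_cart_monomial_left poly2_cart_monomial_right
      poly2_monomial_box_integral poly2_component_left poly2_component_right assms)

theorem mainTheorem5:
  fixes a b :: real and d :: nat
    and P :: "bool \<times> (('n::finite \<Rightarrow> nat) \<times> ('n \<Rightarrow> nat)) \<Rightarrow> bool \<times> (('n \<Rightarrow> nat) \<times> ('n \<Rightarrow> nat)) \<Rightarrow> real"
    and \<alpha> :: "'n \<Rightarrow> nat"
  assumes "a < b"
    and "\<forall>u\<in>Nidx d. \<forall>v\<in>Nidx d. P u v = P v u"
    and "\<forall>i. \<alpha> i \<in> {0, 1}"
  shows "\<exists>k\<alpha>. poly2 k\<alpha> \<and>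
    (\<forall>x\<in>boxX a b. \<forall>y\<in>boxX a b.
       (\<forall>i. (-1) ^ (\<alpha> i) * (x $ i - y $ i) \<ge> (0::real)) \<longrightarrow>
       kern a b d P x y = k\<alpha> x y)"
proof -
  define m :: "real^'n \<Rightarrow> real^'n \<Rightarrow> real^'n" where
    "m x y = (\<chi> i. if \<alpha> i = 0 then x $ i else y $ i)" for x y
  have "poly2 (\<lambda>x y. m x y $ i)" for i
    by (cases "\<alpha> i = 0") (simp_all add: m_def poly2_component_left poly2_component_right)
  then have "poly2 (\<lambda>x y. kernel_formula a b d P x y (m x y))"
    by (rule poly2_kernel_formula)
  moreover have sup_eq: "sup x y = m x y" if "\<forall>i. (-1) ^ (\<alpha> i) * (x $ i - y $ i) \<ge> (0::real)" for x y
  proof -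
    have "sup (x $ i) (y $ i) = (if \<alpha> i = 0 then x $ i else y $ i)" for i
      using that[rule_format, of i] assms(3)[rule_format, of i] by (auto simp: sup_max max_def)
    then show ?thesis
      by (simp add: vec_eq_iff sup_vec_def m_def)
  qed
  ultimately show ?thesis
    by (intro exI[of _ "\<lambda>x y. kernel_formula a b d P x y (m x y)"]) (simp add: kern_eq_kernel_formula sup_eq)
qed

end
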